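(* Let $X$ be an eventually dendric shift space. For every $k\ge1$ there exists $n\ge1$ such that $\mathcal E_k(w)$ is a simple tree for every $w\in\mathcal L_{\ge n}(X)$.
   Context: $A$ is a finite alphabet; a shift space is a closed shift-invariant subset $X\subseteq A^{\mathbb Z}$; $\mathcal L(X)$ is its set of finite factors, $\mathcal L_n(X)=\mathcal L(X)\cap A^n$, $\mathcal L_{\ge n}(X)=\bigcup_{j\ge n}\mathcal L_j(X)$. For $w\in\mathcal L(X)$ and $k\ge1$: $L_k(w)=\{u\in\mathcal L_k(X):uw\in\mathcal L(X)\}$, $R_k(w)=\{v\in\mathcal L_k(X):wv\in\mathcal L(X)\}$, and the extension graph $\mathcal E_k(w)$ is the undirected bipartite graph with vertex set the disjoint union of $L_k(w)$ and $R_k(w)$ and an edge $(u,v)$ iff $uwv\in\mathcal L(X)$. $X$ is eventually dendric if for some $m\ge0$, $\mathcal E_1(w)$ is a tree for every $w\in\mathcal L_{\ge m}(X)$. A tree is simple if its diameter (maximal length of a simple path) is at most $3$. *)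

theory Defs
  imports "HOL-Analysis.Analysis"
begin

definition shift_map :: "(int \<Rightarrow> 'a) \<Rightarrow> (int \<Rightarrow> 'a)" where
  "shift_map x = (\<lambda>i. x (i + 1))"

definition shift_space :: "(int \<Rightarrow> 'a::finite) set \<Rightarrow> bool" where
  "shift_space X \<longleftrightarrow>
     closedin (product_topology (\<lambda>_. discrete_topology UNIV) UNIV) X \<and>
     shift_map ` X = X"

definition factor_at :: "(int \<Rightarrow> 'a) \<Rightarrow> int \<Rightarrow> nat \<Rightarrow> 'a list" where
  "factor_at x i n = map (\<lambda>j. x (i + int j)) [0..<n]"

definition lang :: "(int \<Rightarrow> 'a) set \<Rightarrow> 'a list set" where
  "lang X = {w. \<exists>x\<in>X. \<exists>i. w = factor_at x i (length w)}"

definition lang_n :: "(int \<Rightarrow> 'a) set \<Rightarrow> nat \<Rightarrow> 'a list set" where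
  "lang_n X n = {w \<in> lang X. length w = n}"

definition lang_ge :: "(int \<Rightarrow> 'a) set \<Rightarrow> nat \<Rightarrow> 'a list set" where
  "lang_ge X n = {w \<in> lang X. n \<le> length w}"

definition left_ext :: "(int \<Rightarrow> 'a) set \<Rightarrow> nat \<Rightarrow> 'a list \<Rightarrow> 'a list set" where
  "left_ext X k w = {u \<in> lang_n X k. u @ w \<in> lang X}"

definition right_ext :: "(int \<Rightarrow> 'a) set \<Rightarrow> nat \<Rightarrow> 'a list \<Rightarrow> 'a list set" where
  "right_ext X k w = {v \<in> lang_n X k. w @ v \<in> lang X}"

definition ext_vertices :: "(int \<Rightarrow> 'a) set \<Rightarrow> nat \<Rightarrow> 'a list \<Rightarrow> ('a list + 'a list) set" where
  "ext_vertices X k w = Inl ` left_ext X k w \<union> Inr ` right_ext X k w"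

definition ext_adj :: "(int \<Rightarrow> 'a) set \<Rightarrow> nat \<Rightarrow> 'a list \<Rightarrow> ('a list + 'a list) \<Rightarrow> ('a list + 'a list) \<Rightarrow> bool" where
  "ext_adj X k w a b =
     (a \<in> ext_vertices X k w \<and> b \<in> ext_vertices X k w \<and>
      (case (a, b) of
         (Inl u, Inr v) \<Rightarrow> u @ w @ v \<in> lang X
       | (Inr v, Inl u) \<Rightarrow> u @ w @ v \<in> lang X
       | _ \<Rightarrow> False))"

definition is_path :: "'v set \<Rightarrow> ('v \<Rightarrow> 'v \<Rightarrow> bool) \<Rightarrow> 'v list \<Rightarrow> bool" where
  "is_path V E ps \<longleftrightarrow> ps \<noteq> [] \<and> distinct ps \<and> set ps \<subseteq> V \<and>
     (\<forall>i. Suc i < length ps \<longrightarrow> E (ps ! i) (ps ! Suc i))"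

definition connected_graph :: "'v set \<Rightarrow> ('v \<Rightarrow> 'v \<Rightarrow> bool) \<Rightarrow> bool" where
  "connected_graph V E \<longleftrightarrow> V \<noteq> {} \<and>
     (\<forall>a\<in>V. \<forall>b\<in>V. \<exists>ps. is_path V E ps \<and> hd ps = a \<and> last ps = b)"

definition has_cycle :: "'v set \<Rightarrow> ('v \<Rightarrow> 'v \<Rightarrow> bool) \<Rightarrow> bool" where
  "has_cycle V E \<longleftrightarrow> (\<exists>ps. is_path V E ps \<and> 3 \<le> length ps \<and> E (last ps) (hd ps))"

definition is_tree :: "'v set \<Rightarrow> ('v \<Rightarrow> 'v \<Rightarrow> bool) \<Rightarrow> bool" where
  "is_tree V E \<longleftrightarrow> connected_graph V E \<and> \<not> has_cycle V E"

definition is_simple_tree :: "'v set \<Rightarrow> ('v \<Rightarrow> 'v \<Rightarrow> bool) \<Rightarrow> bool" where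
  "is_simple_tree V E \<longleftrightarrow> is_tree V E \<and> (\<forall>ps. is_path V E ps \<longrightarrow> length ps - 1 \<le> 3)"

definition eventually_dendric :: "(int \<Rightarrow> 'a) set \<Rightarrow> bool" where
  "eventually_dendric X \<longleftrightarrow>
     (\<exists>m. \<forall>w \<in> lang_ge X m. is_tree (ext_vertices X 1 w) (ext_adj X 1 w))"

end

theory Submission
  imports Defs
begin

text \<open>In an eventually dendric language the extension graphs E_1(y) of long words y are trees.
  Counting their edges shows that the total excess of right valences over one, among words of
  length N, does not increase with N, while their connectivity shows that every long right special
  word has a right special left extension. Hence the number of right special words of length N is
  eventually constant, and from then on every right special word has a unique right special left
  extension: the long right special words lie on finitely many left-infinite branches. A long word
  w then determines the branch carrying any right special word u w x with |x| < k, and with it u.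
  So E_k(w) has at most one branching vertex on the left and, by symmetry, at most one on the
  right; since E_k(w) is moreover connected, it is a tree of diameter at most 3.\<close>

section \<open>Paths, cycles and trees\<close>

lemma is_path_mono:
  assumes "is_path V E ps" "V \<subseteq> V'" "\<And>x y. E x y \<Longrightarrow> E' x y"
  shows "is_path V' E' ps"
  using assms unfolding is_path_def by blast

lemma is_path_take:
  assumes "is_path V E ps" "0 < j"
  shows "is_path V E (take j ps)"
  using assms set_take_subset[of j ps] unfolding is_path_def by auto

lemma is_path_drop:
  assumes "is_path V E ps" "i < length ps"
  shows "is_path V E (drop i ps)"
  unfolding is_path_def
proof (intro conjI allI impI)
  fix j assume "Suc j < length (drop i ps)"
  then have "Suc (i + j) < length ps" by simp
  then show "E (drop i ps ! j) (drop i ps ! Suc j)"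
    using assms(1) by (simp add: is_path_def)
qed (use assms set_drop_subset[of i ps] in \<open>auto simp: is_path_def\<close>)

lemma is_path_snoc:
  assumes "is_path V E ps" "E (last ps) d" "d \<notin> set ps" "d \<in> V"
  shows "is_path V E (ps @ [d])"
  unfolding is_path_def
proof (intro conjI allI impI)
  fix i assume i: "Suc i < length (ps @ [d])"
  have "ps \<noteq> []" using assms(1) by (simp add: is_path_def)
  show "E ((ps @ [d]) ! i) ((ps @ [d]) ! Suc i)"
  proof (cases "Suc i < length ps")
    case True
    then show ?thesis using assms(1) by (simp add: is_path_def nth_append)
  next
    case False
    then have "i = length ps - 1" using i by simp
    then show ?thesis using assms(2) \<open>ps \<noteq> []\<close> by (simp add: nth_append last_conv_nth)
  qed
qed (use assms in \<open>auto simp: is_path_def\<close>)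

lemma rtranclp_imp_path:
  assumes "E\<^sup>*\<^sup>* a b" "a \<in> V" "\<And>x y. E x y \<Longrightarrow> y \<in> V"
  shows "\<exists>ps. is_path V E ps \<and> hd ps = a \<and> last ps = b"
  using assms(1)
proof (induction rule: rtranclp_induct)
  case base
  have "is_path V E [a]" using assms(2) by (simp add: is_path_def)
  then show ?case by force
next
  case (step c d)
  then obtain ps where ps: "is_path V E ps" "hd ps = a" "last ps = c" by blast
  have "ps \<noteq> []" using ps(1) by (simp add: is_path_def)
  show ?case
  proof (cases "d \<in> set ps")
    case True
    \<comment> \<open>the walk revisits d: cut the path there\<close>
    then obtain i where i: "i < length ps" "ps ! i = d" by (auto simp: in_set_conv_nth)
    have "is_path V E (take (Suc i) ps)" using is_path_take[OF ps(1)] by simp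
    moreover have "hd (take (Suc i) ps) = a" using ps(2) \<open>ps \<noteq> []\<close> by simp
    moreover have "last (take (Suc i) ps) = d" using i by (simp add: take_Suc_conv_app_nth)
    ultimately show ?thesis by blast
  next
    case False
    then have "is_path V E (ps @ [d])"
      using is_path_snoc[OF ps(1)] ps(3) step(2) assms(3) by blast
    then show ?thesis using ps(2) \<open>ps \<noteq> []\<close> by force
  qed
qed

lemma is_path_imp_rtranclp:
  assumes "is_path V E ps"
  shows "E\<^sup>*\<^sup>* (hd ps) (last ps)"
proof -
  have ne: "ps \<noteq> []" and E: "\<And>i. Suc i < length ps \<Longrightarrow> E (ps ! i) (ps ! Suc i)"
    using assms by (auto simp: is_path_def)
  have "E\<^sup>*\<^sup>* (ps ! 0) (ps ! j)" if "j < length ps" for j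
    using that by (induction j) (auto intro: rtranclp.rtrancl_into_rtrancl E)
  then show ?thesis using ne by (simp add: hd_conv_nth last_conv_nth)
qed

lemma acyclic_ex_degree_le_1:
  assumes fin: "finite V" and ne: "V \<noteq> {}"
    and inV: "\<And>x y. E x y \<Longrightarrow> x \<in> V \<and> y \<in> V" and irrefl: "\<And>x. \<not> E x x"
    and acyclic: "\<not> has_cycle V E"
  shows "\<exists>v\<in>V. card {u. E v u} \<le> 1"
proof -
  \<comment> \<open>the last vertex of a longest path\<close>
  obtain v0 where "v0 \<in> V" using ne by blast
  then have "is_path V E [v0]" by (simp add: is_path_def)
  moreover have "\<forall>ps. is_path V E ps \<longrightarrow> length ps < Suc (card V)"
    unfolding is_path_def by (metis card_mono distinct_card fin less_Suc_eq_le)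
  ultimately obtain ps where ps: "is_path V E ps"
    and longest: "\<And>qs. is_path V E qs \<Longrightarrow> length qs \<le> length ps"
    using ex_has_greatest_nat[of "is_path V E" _ length] by blast
  have "ps \<noteq> []" using ps by (simp add: is_path_def)
  define v where "v = last ps"
  have "v \<in> V" using ps \<open>ps \<noteq> []\<close> unfolding v_def is_path_def by auto
  moreover have "card {u. E v u} \<le> 1"
  proof (rule ccontr)
    assume "\<not> ?thesis"
    then obtain S where "S \<subseteq> {u. E v u}" "card S = 2"
      by (metis not_le_imp_less Suc_1 Suc_leI obtain_subset_with_card_n)
    then obtain c where c: "E v c" "c \<noteq> ps ! (length ps - 2)"
      by (auto simp: card_2_iff)
    show False
    proof (cases "c \<in> set ps")
      case False
      then have "is_path V E (ps @ [c])" using is_path_snoc[OF ps] c(1) inV v_def by blast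
      with longest show False by fastforce
    next
      case True
      then obtain i where i: "i < length ps" "ps ! i = c" by (auto simp: in_set_conv_nth)
      have "ps ! (length ps - 1) = v" using \<open>ps \<noteq> []\<close> by (simp add: v_def last_conv_nth)
      then have "i \<noteq> length ps - 1" using i irrefl c(1) by auto
      moreover have "i \<noteq> length ps - 2" using i c(2) by auto
      ultimately have "3 \<le> length (drop i ps)" using i by simp
      moreover have "is_path V E (drop i ps)" using is_path_drop[OF ps i(1)] .
      moreover have "hd (drop i ps) = c" "last (drop i ps) = v"
        using i by (simp_all add: hd_drop_conv_nth v_def)
      ultimately show False using acyclic c(1) unfolding has_cycle_def by metis
    qed
  qed
  ultimately show ?thesis by blast
qed

definition graph_edges :: "('v \<Rightarrow> 'v \<Rightarrow> bool) \<Rightarrow> 'v set set" where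
  "graph_edges E = {{x, y} | x y. E x y}"

lemma acyclic_card_edges_le:
  assumes "finite V" "V \<noteq> {}" "\<And>x y. E x y \<Longrightarrow> E y x"
    "\<And>x y. E x y \<Longrightarrow> x \<in> V \<and> y \<in> V" "\<And>x. \<not> E x x" "\<not> has_cycle V E"
  shows "card (graph_edges E) + 1 \<le> card V"
  using assms
proof (induction "card V" arbitrary: V E rule: less_induct)
  case less
  obtain v where v: "v \<in> V" "card {u. E v u} \<le> 1"
    using acyclic_ex_degree_le_1[of V E] less.prems by blast
  show ?case
  proof (cases "V = {v}")
    case True
    then have "graph_edges E = {}" using less.prems(4,5) unfolding graph_edges_def by fastforce
    then show ?thesis using True by simp
  next
    case False
    \<comment> \<open>delete the vertex v, which carries at most one edge\<close>
    define V' where "V' = V - {v}"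
    define E' where "E' = (\<lambda>x y. E x y \<and> x \<noteq> v \<and> y \<noteq> v)"
    have "card (graph_edges E') + 1 \<le> card V'"
    proof (rule less.hyps)
      show "card V' < card V" using less.prems(1) v(1) unfolding V'_def by (rule card_Diff1_less)
      show "finite V'" "V' \<noteq> {}" using less.prems(1) v(1) False unfolding V'_def by auto
      show "\<not> has_cycle V' E'"
        using less.prems(6) is_path_mono[of V' E' _ V E] unfolding has_cycle_def E'_def V'_def by blast
    qed (use less.prems(3-5) in \<open>auto simp: E'_def V'_def\<close>)
    moreover have "graph_edges E \<subseteq> graph_edges E' \<union> (\<lambda>u. {v, u}) ` {u. E v u}"
    proof
      fix e assume "e \<in> graph_edges E"
      then obtain x y where e: "e = {x, y}" "E x y" by (auto simp: graph_edges_def)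
      consider "x = v" | "y = v" | "x \<noteq> v" "y \<noteq> v" by blast
      then show "e \<in> graph_edges E' \<union> (\<lambda>u. {v, u}) ` {u. E v u}"
      proof cases
        case 2
        then show ?thesis using e less.prems(3) by (auto simp: insert_commute)
      qed (use e in \<open>auto simp: graph_edges_def E'_def\<close>)
    qed
    moreover have "finite (graph_edges E')"
      by (rule finite_subset[of _ "Pow V"]) (use less.prems(1,4) in \<open>auto simp: graph_edges_def E'_def\<close>)
    moreover have "finite {u. E v u}" using less.prems(1,4) by (auto intro: finite_subset)
    ultimately have "card (graph_edges E) \<le> card (graph_edges E' \<union> (\<lambda>u. {v, u}) ` {u. E v u})"
      by (intro card_mono) auto
    also have "\<dots> \<le> card (graph_edges E') + card ((\<lambda>u. {v, u}) ` {u. E v u})"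
      by (rule card_Un_le)
    also have "\<dots> \<le> card (graph_edges E') + 1"
      using card_image_le[OF \<open>finite {u. E v u}\<close>, of "\<lambda>u. {v, u}"] v(2) by simp
    finally show ?thesis using \<open>card (graph_edges E') + 1 \<le> card V'\<close> less.prems(1) v(1)
      unfolding V'_def by simp
  qed
qed

definition branching :: "('v \<Rightarrow> 'v \<Rightarrow> bool) \<Rightarrow> 'v \<Rightarrow> bool" where
  "branching E x \<longleftrightarrow> (\<exists>a b. E x a \<and> E x b \<and> a \<noteq> b)"

lemma is_path_nth_neq:
  assumes "is_path V E ps" "i < length ps" "j < length ps" "i \<noteq> j"
  shows "ps ! i \<noteq> ps ! j"
  using assms by (simp add: is_path_def nth_eq_iff_index_eq)

lemma is_path_interior_branching:
  assumes "is_path V E ps" "0 < i" "Suc i < length ps" "\<And>x y. E x y \<Longrightarrow> E y x"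
  shows "branching E (ps ! i)"
proof -
  obtain j where i: "i = Suc j" using assms(2) gr0_implies_Suc by blast
  have "E (ps ! j) (ps ! i)" "E (ps ! i) (ps ! Suc i)"
    using assms(1,3) unfolding is_path_def i by simp_all
  moreover have "ps ! j \<noteq> ps ! Suc i" using assms(1,3) i by (intro is_path_nth_neq) auto
  ultimately show ?thesis unfolding branching_def using assms(4) by blast
qed

lemma bipartite_simple_tree:
  assumes sym: "\<And>x y. E x y \<Longrightarrow> E y x" and inV: "\<And>x y. E x y \<Longrightarrow> y \<in> V"
    and side: "\<And>x y. E x y \<Longrightarrow> side x \<noteq> (side y :: bool)"
    and ne: "V \<noteq> {}" and conn: "\<And>p q. p \<in> V \<Longrightarrow> q \<in> V \<Longrightarrow> E\<^sup>*\<^sup>* p q"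
    and unique: "\<And>x y. branching E x \<Longrightarrow> branching E y \<Longrightarrow> side x = side y \<Longrightarrow> x = y"
  shows "is_simple_tree V E"
proof -
  have edge: "E (ps ! i) (ps ! Suc i)" if "is_path V E ps" "Suc i < length ps" for ps i
    using that by (simp add: is_path_def)
  have "connected_graph V E"
    unfolding connected_graph_def
  proof (intro conjI ballI ne)
    fix a b assume "a \<in> V" "b \<in> V"
    then show "\<exists>ps. is_path V E ps \<and> hd ps = a \<and> last ps = b"
      by (intro rtranclp_imp_path[OF conn[OF \<open>a \<in> V\<close> \<open>b \<in> V\<close>] \<open>a \<in> V\<close> inV])
  qed
  moreover have "\<not> has_cycle V E"
  proof
    assume "has_cycle V E"
    then obtain ps where ps: "is_path V E ps" "3 \<le> length ps" "E (last ps) (hd ps)"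
      unfolding has_cycle_def by blast
    have "ps \<noteq> []" using ps(2) by auto
    then have closing: "E (ps ! 0) (ps ! (length ps - 1))"
      using ps(3) sym by (simp add: hd_conv_nth last_conv_nth)
    have e01: "E (ps ! 0) (ps ! 1)" and e12: "E (ps ! 1) (ps ! 2)"
      using edge[OF ps(1), of 0] edge[OF ps(1), of 1] ps(2) by (simp_all add: numeral_2_eq_2)
    show False
    proof (cases "length ps = 3")
      case True
      then have "E (ps ! 0) (ps ! 2)" using closing by (simp add: numeral_3_eq_3 numeral_2_eq_2)
      then have "side (ps ! 0) \<noteq> side (ps ! 2)" by (rule side)
      with side[OF e01] side[OF e12] show False by (cases "side (ps ! 0)") auto
    next
      case False
      have "ps ! 1 \<noteq> ps ! (length ps - 1)" using ps(2) by (intro is_path_nth_neq[OF ps(1)]) auto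
      then have "branching E (ps ! 0)" using e01 closing unfolding branching_def by blast
      moreover have "branching E (ps ! 2)"
        using is_path_interior_branching[OF ps(1) _ _ sym, of 2] False ps(2) by simp
      moreover have "ps ! 0 \<noteq> ps ! 2" using ps(2) by (intro is_path_nth_neq[OF ps(1)]) auto
      moreover have "side (ps ! 0) = side (ps ! 2)"
        using side[OF e01] side[OF e12] by (cases "side (ps ! 0)") auto
      ultimately show False using unique by blast
    qed
  qed
  moreover have "length ps - 1 \<le> 3" if ps: "is_path V E ps" for ps
  proof (rule ccontr)
    assume long: "\<not> ?thesis"
    then have "branching E (ps ! 1)" "branching E (ps ! 3)"
      using is_path_interior_branching[OF ps _ _ sym] by simp_all
    moreover have "ps ! 1 \<noteq> ps ! 3" using long by (intro is_path_nth_neq[OF ps]) auto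
    moreover have "side (ps ! 1) = side (ps ! 3)"
      using side[OF edge[OF ps, of 1]] side[OF edge[OF ps, of 2]] long
      by (cases "side (ps ! 1)") (auto simp: numeral_2_eq_2 numeral_3_eq_3)
    ultimately show False using unique by blast
  qed
  ultimately show ?thesis unfolding is_simple_tree_def is_tree_def by blast
qed

section \<open>Extension graphs of a language\<close>

text \<open>E_{a,c}(y) has the left extensions of y of length a and its right extensions of length c
  as vertices; ext_vertices X k w and ext_adj X k w are the case a = c = k for lang X.\<close>

definition left_words :: "'a list set \<Rightarrow> nat \<Rightarrow> 'a list \<Rightarrow> 'a list set" where
  "left_words L a y = {u. length u = a \<and> u @ y \<in> L}"

definition right_words :: "'a list set \<Rightarrow> nat \<Rightarrow> 'a list \<Rightarrow> 'a list set" where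
  "right_words L c y = {v. length v = c \<and> y @ v \<in> L}"

definition ext_graph_vertices :: "'a list set \<Rightarrow> nat \<Rightarrow> nat \<Rightarrow> 'a list \<Rightarrow> ('a list + 'a list) set" where
  "ext_graph_vertices L a c y = Inl ` left_words L a y \<union> Inr ` right_words L c y"

definition ext_graph_adj ::
    "'a list set \<Rightarrow> nat \<Rightarrow> nat \<Rightarrow> 'a list \<Rightarrow> ('a list + 'a list) \<Rightarrow> ('a list + 'a list) \<Rightarrow> bool" where
  "ext_graph_adj L a c y p q = (case (p, q) of
      (Inl u, Inr v) \<Rightarrow> length u = a \<and> length v = c \<and> u @ y @ v \<in> L
    | (Inr v, Inl u) \<Rightarrow> length u = a \<and> length v = c \<and> u @ y @ v \<in> L
    | _ \<Rightarrow> False)"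

definition ext_graph_connected :: "'a list set \<Rightarrow> nat \<Rightarrow> nat \<Rightarrow> 'a list \<Rightarrow> bool" where
  "ext_graph_connected L a c y \<longleftrightarrow>
     (\<forall>p\<in>ext_graph_vertices L a c y. \<forall>q\<in>ext_graph_vertices L a c y. (ext_graph_adj L a c y)\<^sup>*\<^sup>* p q)"

lemma ext_graph_adj_simps [simp]:
  "ext_graph_adj L a c y (Inl u) (Inr v) \<longleftrightarrow> length u = a \<and> length v = c \<and> u @ y @ v \<in> L"
  "ext_graph_adj L a c y (Inr v) (Inl u) \<longleftrightarrow> length u = a \<and> length v = c \<and> u @ y @ v \<in> L"
  "\<not> ext_graph_adj L a c y (Inl u) (Inl u')"
  "\<not> ext_graph_adj L a c y (Inr v) (Inr v')"
  by (simp_all add: ext_graph_adj_def)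

lemma ext_graph_adj_sym: "ext_graph_adj L a c y p q \<Longrightarrow> ext_graph_adj L a c y q p"
  by (cases p; cases q) auto

lemma rtranclp_symmetric:
  assumes "\<And>x y. R x y \<Longrightarrow> R y x" "R\<^sup>*\<^sup>* p q"
  shows "R\<^sup>*\<^sup>* q p"
  using assms(2) by induction (auto intro: converse_rtranclp_into_rtranclp assms(1))

lemma rtranclp_map:
  assumes "\<And>p q. R p q \<Longrightarrow> R' (f p) (f q)" "R\<^sup>*\<^sup>* p q"
  shows "R'\<^sup>*\<^sup>* (f p) (f q)"
  using assms(2) by induction (auto intro: rtranclp.rtrancl_into_rtrancl assms(1))

definition right_valence :: "'a list set \<Rightarrow> 'a list \<Rightarrow> nat" where
  "right_valence L z = card {b. z @ [b] \<in> L}"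

abbreviation right_special :: "'a list set \<Rightarrow> 'a list \<Rightarrow> bool" where
  "right_special L z \<equiv> 2 \<le> right_valence L z"

lemma right_special_iff:
  fixes L :: "'a::finite list set"
  shows "right_special L z \<longleftrightarrow> (\<exists>b b'. b \<noteq> b' \<and> z @ [b] \<in> L \<and> z @ [b'] \<in> L)"
proof
  assume "right_special L z"
  then obtain S where "S \<subseteq> {b. z @ [b] \<in> L}" "card S = 2"
    unfolding right_valence_def by (meson obtain_subset_with_card_n)
  then show "\<exists>b b'. b \<noteq> b' \<and> z @ [b] \<in> L \<and> z @ [b'] \<in> L" by (auto simp: card_2_iff)
next
  assume "\<exists>b b'. b \<noteq> b' \<and> z @ [b] \<in> L \<and> z @ [b'] \<in> L"
  then obtain b b' where "b \<noteq> b'" "{b, b'} \<subseteq> {b. z @ [b] \<in> L}" by auto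
  then show "right_special L z" unfolding right_valence_def by (metis card_2_iff card_mono finite)
qed

lemma finite_lists_of_length: "finite {xs :: 'a::finite list. length xs = n}"
  using finite_lists_length_eq[of "UNIV :: 'a set" n] by simp

text \<open>Abstracts the language of an eventually dendric shift space: of the tree property of
  E_1(y) only connectivity and the edge count (#edges < #vertices) are kept.\<close>

locale eventually_dendric_language =
  fixes L :: "'a::finite list set" and m :: nat
  assumes factor_closed: "u @ v @ w \<in> L \<Longrightarrow> v \<in> L"
    and extend_left: "y \<in> L \<Longrightarrow> \<exists>a. a # y \<in> L"
    and extend_right: "y \<in> L \<Longrightarrow> \<exists>b. y @ [b] \<in> L"
    and connected_ext1: "y \<in> L \<Longrightarrow> m \<le> length y \<Longrightarrow> ext_graph_connected L 1 1 y"
    and forest_ext1: "y \<in> L \<Longrightarrow> m \<le> length y \<Longrightarrow>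
       card {(a, b). a # y @ [b] \<in> L} + 1 \<le> card {a. a # y \<in> L} + card {b. y @ [b] \<in> L}"
begin

lemma prefix_closed: "u @ v \<in> L \<Longrightarrow> u \<in> L"
  using factor_closed[of "[]" u v] by simp

lemma suffix_closed: "u @ v \<in> L \<Longrightarrow> v \<in> L"
  using factor_closed[of u v "[]"] by simp

lemma right_valence_append_le: "right_valence L (u @ z) \<le> right_valence L z"
  unfolding right_valence_def by (rule card_mono) (auto intro: suffix_closed)

lemma right_special_appendD: "right_special L (u @ z) \<Longrightarrow> right_special L z"
  using right_valence_append_le[of u z] by linarith

lemma right_special_in_lang: "right_special L z \<Longrightarrow> z \<in> L"
  using right_special_iff prefix_closed by metis

lemma right_valence_pos: "z \<in> L \<Longrightarrow> 1 \<le> right_valence L z"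
  using extend_right[of z] unfolding right_valence_def
  by (metis One_nat_def Suc_leI card_gt_0_iff empty_iff finite mem_Collect_eq)

lemma extend_left_length: "y \<in> L \<Longrightarrow> \<exists>u. length u = a \<and> u @ y \<in> L"
proof (induction a)
  case (Suc a)
  then obtain u where "length u = a" "u @ y \<in> L" by blast
  moreover obtain b where "b # u @ y \<in> L" using extend_left[OF \<open>u @ y \<in> L\<close>] by blast
  ultimately show ?case by (metis Cons_eq_appendI length_Cons)
qed simp

text \<open>In E_1(y) a right vertex adjacent only to left vertices of degree one would be a
  component of its own; connectivity therefore forces a left neighbour a of degree at least two.\<close>

lemma right_special_extend_left:
  assumes y: "y \<in> L" "m \<le> length y" and special: "right_special L y"
  shows "\<exists>a. right_special L (a # y)"
proof (rule ccontr)
  assume "\<not> ?thesis"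
  then have unique: "b1 = b2" if "a # y @ [b1] \<in> L" "a # y @ [b2] \<in> L" for a b1 b2
    using that right_special_iff[of L "a # y"] by auto
  obtain b b' where bb: "b \<noteq> b'" "y @ [b] \<in> L" "y @ [b'] \<in> L"
    using special right_special_iff by blast
  let ?G = "ext_graph_adj L 1 1 y"
  have component: "q = Inr [b] \<or> (\<exists>u. q = Inl u \<and> ?G (Inl u) (Inr [b]))"
    if "?G\<^sup>*\<^sup>* (Inr [b]) q" for q
    using that
  proof induction
    case (step q q')
    then show ?case
    proof (elim disjE exE conjE)
      assume "q = Inr [b]"
      with step.hyps(2) show ?thesis by (cases q') auto
    next
      fix u assume u: "q = Inl u" "?G (Inl u) (Inr [b])"
      then obtain a where "u = [a]" "a # y @ [b] \<in> L" by (auto simp: length_Suc_conv)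
      with step.hyps(2) u(1) unique show ?thesis
        by (cases q') (auto simp: length_Suc_conv)
    qed
  qed simp
  have "Inr [b] \<in> ext_graph_vertices L 1 1 y" "Inr [b'] \<in> ext_graph_vertices L 1 1 y"
    using bb unfolding ext_graph_vertices_def right_words_def by auto
  then have "?G\<^sup>*\<^sup>* (Inr [b]) (Inr [b'])"
    using connected_ext1[OF y] unfolding ext_graph_connected_def by blast
  with component bb(1) show False by blast
qed

text \<open>Edge count of the forest E_1(y): the left vertex a carries right_valence L (a # y)
  edges.\<close>

lemma sum_excess_left_extensions_le:
  assumes "y \<in> L" "m \<le> length y"
  shows "(\<Sum>a\<in>{a. a # y \<in> L}. right_valence L (a # y) - 1) + 1 \<le> right_valence L y"
proof -
  let ?A = "{a. a # y \<in> L}"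
  have edges: "{(a, b). a # y @ [b] \<in> L} = Sigma ?A (\<lambda>a. {b. (a # y) @ [b] \<in> L})"
    using prefix_closed by auto
  have "card {(a, b). a # y @ [b] \<in> L} = (\<Sum>a\<in>?A. right_valence L (a # y))"
    unfolding edges right_valence_def by (rule card_SigmaI) auto
  also have "\<dots> = (\<Sum>a\<in>?A. (right_valence L (a # y) - 1) + 1)"
    by (rule sum.cong) (auto dest: right_valence_pos)
  also have "\<dots> = (\<Sum>a\<in>?A. right_valence L (a # y) - 1) + card ?A"
    by (simp only: sum.distrib card_eq_sum)
  finally show ?thesis using forest_ext1[OF assms] unfolding right_valence_def by simp
qed

section \<open>Counting right special words\<close>

definition words :: "nat \<Rightarrow> 'a list set" where
  "words N = {y \<in> L. length y = N}"

definition right_excess :: "nat \<Rightarrow> nat" where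
  "right_excess N = (\<Sum>y\<in>words N. right_valence L y - 1)"

definition right_specials :: "nat \<Rightarrow> 'a list set" where
  "right_specials N = {y \<in> words N. right_special L y}"

lemma finite_words: "finite (words N)"
  by (rule finite_subset[OF _ finite_lists_of_length[of N]]) (auto simp: words_def)

lemma finite_right_specials: "finite (right_specials N)"
  using finite_words by (simp add: right_specials_def)

lemma words_Suc: "words (Suc N) = (\<lambda>(y, a). a # y) ` Sigma (words N) (\<lambda>y. {a. a # y \<in> L})"
  by (auto simp: words_def length_Suc_conv image_iff intro: suffix_closed[of "[_]", simplified])

lemma right_excess_Suc_le:
  assumes "m \<le> N"
  shows "right_excess (Suc N) \<le> right_excess N"
proof -
  have "inj_on (\<lambda>(y, a). a # y) (Sigma (words N) (\<lambda>y. {a. a # y \<in> L}))"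
    by (auto simp: inj_on_def)
  then have "right_excess (Suc N) =
      (\<Sum>(y, a)\<in>Sigma (words N) (\<lambda>y. {a. a # y \<in> L}). right_valence L (a # y) - 1)"
    unfolding right_excess_def words_Suc by (rule sum.reindex_cong[OF _ refl]) auto
  also have "\<dots> = (\<Sum>y\<in>words N. \<Sum>a\<in>{a. a # y \<in> L}. right_valence L (a # y) - 1)"
    by (rule sum.Sigma[symmetric]) (auto simp: finite_words)
  also have "\<dots> \<le> (\<Sum>y\<in>words N. right_valence L y - 1)"
  proof (rule sum_mono)
    fix y assume "y \<in> words N"
    then show "(\<Sum>a\<in>{a. a # y \<in> L}. right_valence L (a # y) - 1) \<le> right_valence L y - 1"
      using sum_excess_left_extensions_le[of y] assms by (simp add: words_def)
  qed
  finally show ?thesis unfolding right_excess_def .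
qed

lemma right_excess_le: "m \<le> N \<Longrightarrow> right_excess N \<le> right_excess m"
proof (induction N rule: dec_induct)
  case (step N)
  then show ?case using right_excess_Suc_le[of N] by simp
qed simp

lemma card_right_specials_le_excess: "card (right_specials N) \<le> right_excess N"
proof -
  have "card (right_specials N) = (\<Sum>y\<in>right_specials N. 1)" by simp
  also have "\<dots> \<le> (\<Sum>y\<in>right_specials N. right_valence L y - 1)"
    by (rule sum_mono) (auto simp: right_specials_def)
  also have "\<dots> \<le> right_excess N"
    unfolding right_excess_def by (rule sum_mono2[OF finite_words]) (auto simp: right_specials_def)
  finally show ?thesis .
qed

lemma tl_right_specials:
  assumes "m \<le> N"
  shows "tl ` right_specials (Suc N) = right_specials N"
proof
  show "tl ` right_specials (Suc N) \<subseteq> right_specials N"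
    by (auto simp: right_specials_def words_def length_Suc_conv
        intro: suffix_closed[of "[_]", simplified] right_special_appendD[of "[_]", simplified])
next
  show "right_specials N \<subseteq> tl ` right_specials (Suc N)"
  proof
    fix y assume y: "y \<in> right_specials N"
    then obtain a where a: "right_special L (a # y)"
      using right_special_extend_left assms by (auto simp: right_specials_def words_def)
    then have "a # y \<in> right_specials (Suc N)"
      using y right_special_in_lang by (simp add: right_specials_def words_def)
    then show "y \<in> tl ` right_specials (Suc N)" by force
  qed
qed

lemma card_right_specials_mono:
  assumes "m \<le> N" "N \<le> N'"
  shows "card (right_specials N) \<le> card (right_specials N')"
  using assms(2)
proof (induction N' rule: dec_induct)
  case (step N')
  then show ?case
    using tl_right_specials[of N'] card_image_le[OF finite_right_specials, of tl "Suc N'"] assms(1)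
    by simp
qed simp

definition special_extensions_unique :: "nat \<Rightarrow> bool" where
  "special_extensions_unique N0 \<longleftrightarrow> m \<le> N0 \<and>
     (\<forall>y a a'. N0 \<le> length y \<longrightarrow> right_special L (a # y) \<longrightarrow> right_special L (a' # y) \<longrightarrow> a = a')"

text \<open>The number of right special words of length N is nondecreasing and bounded by the
  nonincreasing right excess; once it is constant, tl is a bijection between right special words
  of consecutive lengths.\<close>

lemma ex_special_extensions_unique: "\<exists>N0. special_extensions_unique N0"
proof -
  have "\<forall>N. m \<le> N \<longrightarrow> card (right_specials N) < Suc (right_excess m)"
    using card_right_specials_le_excess right_excess_le le_imp_less_Suc le_trans by blast
  then obtain N0 where N0: "m \<le> N0"
    and max: "\<And>N. m \<le> N \<Longrightarrow> card (right_specials N) \<le> card (right_specials N0)"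
    using ex_has_greatest_nat[of "\<lambda>N. m \<le> N" m "\<lambda>N. card (right_specials N)"] by blast
  have "a = a'" if y: "N0 \<le> length y" "right_special L (a # y)" "right_special L (a' # y)" for y a a'
  proof -
    let ?N = "length y"
    have "card (tl ` right_specials (Suc ?N)) = card (right_specials (Suc ?N))"
      using tl_right_specials[of ?N] card_right_specials_mono[OF N0, of ?N] card_image_le
        max[of "Suc ?N"] N0 y(1) finite_right_specials by (metis le_SucI le_antisym le_trans)
    then have "inj_on tl (right_specials (Suc ?N))"
      by (simp add: inj_on_iff_eq_card finite_right_specials)
    moreover have "a # y \<in> right_specials (Suc ?N)" "a' # y \<in> right_specials (Suc ?N)"
      using y right_special_in_lang by (auto simp: right_specials_def words_def)
    ultimately show "a = a'" by (metis inj_onD list.inject list.sel(3))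
  qed
  then show ?thesis using N0 unfolding special_extensions_unique_def by blast
qed

end

section \<open>Left-infinite special branches\<close>

text \<open>special_pred L y is an arbitrary letter unless some a # y is right special.\<close>

definition special_pred :: "'a list set \<Rightarrow> 'a list \<Rightarrow> 'a" where
  "special_pred L y = (SOME a. right_special L (a # y))"

primrec special_ext :: "'a list set \<Rightarrow> nat \<Rightarrow> 'a list \<Rightarrow> 'a list" where
  "special_ext L 0 y = y"
| "special_ext L (Suc s) y = special_pred L (special_ext L s y) # special_ext L s y"

text \<open>Letter number t, counted from the right end of z, of the left-infinite word obtained by
  extending z to the left by special_pred for ever.\<close>

definition branch_letter :: "'a list set \<Rightarrow> 'a list \<Rightarrow> nat \<Rightarrow> 'a" where
  "branch_letter L z t = rev (special_ext L (Suc t) z) ! t"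

lemma length_special_ext [simp]: "length (special_ext L s y) = length y + s"
  by (induction s) auto

lemma special_ext_suffix: "\<exists>p. special_ext L (s + d) y = p @ special_ext L s y"
proof (induction d)
  case (Suc d)
  then show ?case by (metis add_Suc_right append_Cons special_ext.simps(2))
qed simp

lemma rev_special_ext_nth_stable:
  assumes "t < length z + s"
  shows "rev (special_ext L (s + d) z) ! t = rev (special_ext L s z) ! t"
proof -
  obtain p where "special_ext L (s + d) z = p @ special_ext L s z"
    using special_ext_suffix by blast
  then show ?thesis using assms by (simp add: nth_append)
qed

lemma rev_special_ext_nth:
  assumes "t < length z + s"
  shows "rev (special_ext L s z) ! t = branch_letter L z t"
proof -
  have "rev (special_ext L s z) ! t = rev (special_ext L (s + Suc t) z) ! t"
    by (rule rev_special_ext_nth_stable[OF assms, symmetric])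
  also have "\<dots> = rev (special_ext L (Suc t + s) z) ! t" by (simp only: add.commute)
  also have "\<dots> = branch_letter L z t"
    unfolding branch_letter_def by (rule rev_special_ext_nth_stable) simp
  finally show ?thesis .
qed

lemma finite_family_distinguished_below:
  fixes f :: "'q \<Rightarrow> nat \<Rightarrow> 'b"
  assumes "finite Q"
  shows "\<exists>n. \<forall>p\<in>Q. \<forall>q\<in>Q. f p \<noteq> f q \<longrightarrow> (\<exists>t<n. f p t \<noteq> f q t)"
proof (rule exI, intro ballI impI)
  let ?d = "\<lambda>(p, q). LEAST t. f p t \<noteq> f q t"
  fix p q assume "p \<in> Q" "q \<in> Q" "f p \<noteq> f q"
  then obtain t where "f p t \<noteq> f q t" by (auto simp: fun_eq_iff)
  then have "f p (?d (p, q)) \<noteq> f q (?d (p, q))" by (simp add: LeastI[of "\<lambda>t. f p t \<noteq> f q t"])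
  moreover have "?d (p, q) < Suc (Max (?d ` (Q \<times> Q)))"
    using assms \<open>p \<in> Q\<close> \<open>q \<in> Q\<close> by (intro le_imp_less_Suc Max_ge) auto
  ultimately show "\<exists>t<Suc (Max (?d ` (Q \<times> Q))). f p t \<noteq> f q t" by blast
qed

context eventually_dendric_language
begin

lemma right_special_special_ext:
  assumes "special_extensions_unique N0" "N0 \<le> length y" "right_special L y"
  shows "right_special L (special_ext L s y)"
proof (induction s)
  case (Suc s)
  have "\<exists>a. right_special L (a # special_ext L s y)"
    using Suc right_special_in_lang assms right_special_extend_left
    by (simp add: special_extensions_unique_def)
  then have "right_special L (special_pred L (special_ext L s y) # special_ext L s y)"
    unfolding special_pred_def by (rule someI_ex)
  then show ?case by simp
qed (use assms in simp)

lemma right_special_eq_special_ext: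
  assumes "special_extensions_unique N0" "N0 \<le> length y" "right_special L y"
  shows "right_special L (u @ y) \<Longrightarrow> u @ y = special_ext L (length u) y"
proof (induction u)
  case (Cons a u)
  then have IH: "u @ y = special_ext L (length u) y"
    using right_special_appendD[of "[a]" "u @ y"] by simp
  moreover have "right_special L (special_pred L (u @ y) # u @ y)"
    using right_special_special_ext[OF assms, of "Suc (length u)"] IH by simp
  moreover have "N0 \<le> length (u @ y)" using assms(2) by simp
  moreover have "right_special L (a # u @ y)" using Cons.prems by simp
  ultimately have "a = special_pred L (u @ y)"
    using assms(1) unfolding special_extensions_unique_def by blast
  with IH show ?case by simp
qed simp

lemma right_special_on_branch:
  assumes "special_extensions_unique N0" "N0 \<le> length y" "right_special L y"
  shows "\<exists>z\<in>right_specials N0. \<forall>t<length y. rev y ! t = branch_letter L z t"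
proof -
  define s where "s = length y - N0"
  define z where "z = drop s y"
  have y: "y = take s y @ z" unfolding z_def by simp
  have "length z = N0" using assms(2) by (simp add: z_def s_def)
  have "right_special L z" using assms(3) y right_special_appendD by metis
  then have z: "z \<in> right_specials N0"
    using \<open>length z = N0\<close> right_special_in_lang by (simp add: right_specials_def words_def)
  have y_ext: "y = special_ext L s z"
    using right_special_eq_special_ext[OF assms(1) _ \<open>right_special L z\<close>, of "take s y"]
      y assms(2,3) \<open>length z = N0\<close> by (simp add: s_def)
  have "rev y ! t = branch_letter L z t" if "t < length y" for t
  proof -
    have "t < length z + s" using that \<open>length z = N0\<close> assms(2) by (simp add: s_def)
    then show ?thesis using y_ext rev_special_ext_nth by metis
  qed
  with z show ?thesis by blast
qed

text \<open>Different branches (shifted by less than k) differ within a bounded distance n, so a word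
  w of length at least n determines the branch, and with it the k letters to the left of w.\<close>

lemma left_context_unique:
  "\<exists>n. \<forall>w u u' x x'. n \<le> length w \<longrightarrow> length u = k \<longrightarrow> length u' = k \<longrightarrow>
     length x < k \<longrightarrow> length x' < k \<longrightarrow>
     right_special L (u @ w @ x) \<longrightarrow> right_special L (u' @ w @ x') \<longrightarrow> u = u'"
proof -
  obtain N0 where N0: "special_extensions_unique N0" using ex_special_extensions_unique by blast
  define f where "f = (\<lambda>(z, j) t. branch_letter L z (j + t))"
  obtain n0 where n0: "\<And>p q. p \<in> right_specials N0 \<times> {..<k} \<Longrightarrow> q \<in> right_specials N0 \<times> {..<k} \<Longrightarrow>
      f p \<noteq> f q \<Longrightarrow> \<exists>t<n0. f p t \<noteq> f q t"
    using finite_family_distinguished_below[of "right_specials N0 \<times> {..<k}" f]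
      finite_right_specials by blast
  have reads: "\<exists>p\<in>right_specials N0 \<times> {..<k}. (\<forall>t<length w. rev w ! t = f p t) \<and>
      (\<forall>t<k. rev u ! t = f p (length w + t))"
    if len: "N0 \<le> length w" "length u = k" "length x < k"
      and special: "right_special L (u @ w @ x)" for u w x
  proof -
    obtain z where z: "z \<in> right_specials N0"
      "\<And>t. t < length (u @ w @ x) \<Longrightarrow> rev (u @ w @ x) ! t = branch_letter L z t"
      using right_special_on_branch[OF N0 _ special] len(1) by auto
    have "rev w ! t = f (z, length x) t" if "t < length w" for t
      using z(2)[of "length x + t"] that by (simp add: f_def nth_append)
    moreover have "rev u ! t = f (z, length x) (length w + t)" if "t < k" for t
      using z(2)[of "length x + length w + t"] that \<open>length u = k\<close>
      by (simp add: f_def nth_append add.assoc)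
    ultimately show ?thesis using z(1) \<open>length x < k\<close> by blast
  qed
  have "u = u'"
    if len: "max N0 n0 \<le> length w" "length u = k" "length u' = k" "length x < k" "length x' < k"
      and special: "right_special L (u @ w @ x)" "right_special L (u' @ w @ x')" for w u u' x x'
  proof -
    obtain p where p: "p \<in> right_specials N0 \<times> {..<k}" "\<forall>t<length w. rev w ! t = f p t"
      "\<forall>t<k. rev u ! t = f p (length w + t)"
      using reads[of w u x] len special by auto
    obtain q where q: "q \<in> right_specials N0 \<times> {..<k}" "\<forall>t<length w. rev w ! t = f q t"
      "\<forall>t<k. rev u' ! t = f q (length w + t)"
      using reads[of w u' x'] len special by auto
    have "f p = f q" using n0[OF p(1) q(1)] p(2) q(2) len(1) by fastforce
    then have "rev u = rev u'" using p(3) q(3) len(2,3) by (intro nth_equalityI) auto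
    then show ?thesis by simp
  qed
  then show ?thesis by blast
qed

end

section \<open>Branching vertices and connectivity of E_k\<close>

definition left_branching :: "'a list set \<Rightarrow> nat \<Rightarrow> 'a list \<Rightarrow> 'a list \<Rightarrow> bool" where
  "left_branching L c w u \<longleftrightarrow>
     (\<exists>v v'. length v = c \<and> length v' = c \<and> v \<noteq> v' \<and> u @ w @ v \<in> L \<and> u @ w @ v' \<in> L)"

definition right_branching :: "'a list set \<Rightarrow> nat \<Rightarrow> 'a list \<Rightarrow> 'a list \<Rightarrow> bool" where
  "right_branching L a w v \<longleftrightarrow>
     (\<exists>u u'. length u = a \<and> length u' = a \<and> u \<noteq> u' \<and> u @ w @ v \<in> L \<and> u' @ w @ v \<in> L)"

lemma mem_rev_image_iff: "x \<in> rev ` L \<longleftrightarrow> rev x \<in> L"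
  by (metis image_iff rev_rev_ident)

lemma right_branching_iff_rev:
  "right_branching L a w v \<longleftrightarrow> left_branching (rev ` L) a (rev w) (rev v)"
  unfolding right_branching_def left_branching_def mem_rev_image_iff
  by (metis length_rev rev_append rev_rev_ident append_assoc)

lemma branching_ext_graph_adj_Inl:
  assumes "branching (ext_graph_adj L a c w) (Inl u)"
  shows "length u = a \<and> left_branching L c w u"
proof -
  obtain p q where pq: "ext_graph_adj L a c w (Inl u) p" "ext_graph_adj L a c w (Inl u) q" "p \<noteq> q"
    using assms unfolding branching_def by blast
  then obtain v v' where "p = Inr v" "q = Inr v'" by (cases p; cases q) auto
  with pq show ?thesis unfolding left_branching_def by auto
qed

lemma branching_ext_graph_adj_Inr:
  assumes "branching (ext_graph_adj L a c w) (Inr v)"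
  shows "length v = c \<and> right_branching L a w v"
proof -
  obtain p q where pq: "ext_graph_adj L a c w (Inr v) p" "ext_graph_adj L a c w (Inr v) q" "p \<noteq> q"
    using assms unfolding branching_def by blast
  then obtain u u' where "p = Inl u" "q = Inl u'" by (cases p; cases q) auto
  with pq show ?thesis unfolding right_branching_def by auto
qed

context eventually_dendric_language
begin

lemma infix_extensions_closed: "u @ y @ v \<in> L \<Longrightarrow> u @ y \<in> L \<and> y @ v \<in> L"
  using prefix_closed[of "u @ y" v] suffix_closed[of u "y @ v"] by simp

lemma left_branching_right_special:
  assumes "left_branching L k w u"
  shows "\<exists>x. length x < k \<and> right_special L (u @ w @ x)"
proof -
  obtain v v' where v: "length v = k" "length v' = k" "v \<noteq> v'" "u @ w @ v \<in> L" "u @ w @ v' \<in> L"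
    using assms unfolding left_branching_def by blast
  obtain x r r' where x: "v = x @ r" "v' = x @ r'" "r = [] \<or> r' = [] \<or> hd r \<noteq> hd r'"
    using longest_common_prefix by blast
  have "length r = length r'" using v(1,2) x(1,2) by simp
  then obtain b b' s s' where "r = b # s" "r' = b' # s'" "b \<noteq> b'"
    using x v(3) by (cases r; cases r') auto
  then have "(u @ w @ x) @ [b] \<in> L" "(u @ w @ x) @ [b'] \<in> L" "length x < k"
    using v(1,4,5) x(1,2) prefix_closed[of "(u @ w @ x) @ [_]"] by auto
  then show ?thesis using \<open>b \<noteq> b'\<close> right_special_iff by blast
qed

lemma left_branching_unique:
  "\<exists>n. \<forall>w u u'. n \<le> length w \<longrightarrow> length u = k \<longrightarrow> length u' = k \<longrightarrow>
     left_branching L k w u \<longrightarrow> left_branching L k w u' \<longrightarrow> u = u'"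
  using left_context_unique[of k] left_branching_right_special by metis

lemma ext_graph_adj_in_vertices:
  "ext_graph_adj L a c y p q \<Longrightarrow> q \<in> ext_graph_vertices L a c y"
  by (cases p; cases q)
    (auto simp: ext_graph_vertices_def left_words_def right_words_def dest: infix_extensions_closed)

text \<open>Two left vertices with a common neighbour v in the extension graph of y are joined through
  the extension graph of y v; appending v to its right vertices embeds that graph.\<close>

lemma common_right_neighbour_reachable:
  assumes connected: "\<And>y. y \<in> L \<Longrightarrow> m \<le> length y \<Longrightarrow> ext_graph_connected L a 1 y"
    and "m \<le> length y" "ext_graph_adj L a c y (Inl u) (Inr v)" "ext_graph_adj L a c y (Inl u') (Inr v)"
  shows "(ext_graph_adj L a (Suc c) y)\<^sup>*\<^sup>* (Inl u) (Inl u')"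
proof -
  have uv: "length u = a" "length u' = a" "length v = c" "u @ y @ v \<in> L" "u' @ y @ v \<in> L"
    using assms(3,4) by auto
  then have "y @ v \<in> L" using infix_extensions_closed by blast
  then have "ext_graph_connected L a 1 (y @ v)" using connected assms(2) by simp
  moreover have "Inl u \<in> ext_graph_vertices L a 1 (y @ v)" "Inl u' \<in> ext_graph_vertices L a 1 (y @ v)"
    using uv by (simp_all add: ext_graph_vertices_def left_words_def)
  ultimately have path: "(ext_graph_adj L a 1 (y @ v))\<^sup>*\<^sup>* (Inl u) (Inl u')"
    unfolding ext_graph_connected_def by blast
  have embed: "ext_graph_adj L a (Suc c) y (map_sum id ((@) v) p) (map_sum id ((@) v) q)"
    if "ext_graph_adj L a 1 (y @ v) p q" for p q
    using that uv(3) by (cases p; cases q) auto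
  show ?thesis using rtranclp_map[where R = "ext_graph_adj L a 1 (y @ v)" and R' = "ext_graph_adj L a (Suc c) y"
      and f = "map_sum id ((@) v)", OF embed path] by simp
qed

lemma ext_graph_left_reachable_Suc_right:
  assumes "\<And>y. y \<in> L \<Longrightarrow> m \<le> length y \<Longrightarrow> ext_graph_connected L a 1 y" "m \<le> length y"
    and "(ext_graph_adj L a c y)\<^sup>*\<^sup>* (Inl x) q"
  shows "case q of
      Inl u \<Rightarrow> (ext_graph_adj L a (Suc c) y)\<^sup>*\<^sup>* (Inl x) (Inl u)
    | Inr v \<Rightarrow> \<exists>u. ext_graph_adj L a c y (Inl u) (Inr v) \<and> (ext_graph_adj L a (Suc c) y)\<^sup>*\<^sup>* (Inl x) (Inl u)"
  using assms(3)
proof induction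
  case (step q q')
  show ?case
  proof (cases q)
    case (Inl u)
    with step show ?thesis by (cases q') auto
  next
    case (Inr v)
    then obtain u' where "q' = Inl u'" using step.hyps(2) by (cases q') auto
    moreover obtain u where "ext_graph_adj L a c y (Inl u) (Inr v)"
      "(ext_graph_adj L a (Suc c) y)\<^sup>*\<^sup>* (Inl x) (Inl u)"
      using step.IH Inr by auto
    ultimately show ?thesis
      using common_right_neighbour_reachable[OF assms(1,2)] step.hyps(2) Inr
      by (auto intro: rtranclp_trans ext_graph_adj_sym)
  qed
qed simp

lemma ext_graph_connected_Suc_right:
  assumes "\<And>y. y \<in> L \<Longrightarrow> m \<le> length y \<Longrightarrow> ext_graph_connected L a 1 y"
    and y: "y \<in> L" "m \<le> length y" and connected: "ext_graph_connected L a c y"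
  shows "ext_graph_connected L a (Suc c) y"
  unfolding ext_graph_connected_def
proof (intro ballI)
  let ?G' = "ext_graph_adj L a (Suc c) y"
  have anchor: "\<exists>u\<in>left_words L a y. ?G'\<^sup>*\<^sup>* p (Inl u)" if "p \<in> ext_graph_vertices L a (Suc c) y" for p
  proof (cases p)
    case (Inr v)
    then have "length v = Suc c" "y @ v \<in> L"
      using that by (auto simp: ext_graph_vertices_def right_words_def)
    moreover obtain u where "length u = a" "u @ y @ v \<in> L" using extend_left_length calculation(2) by blast
    ultimately show ?thesis
      using Inr prefix_closed[of "u @ y" v]
      by (intro bexI[of _ u]) (auto simp: left_words_def intro: ext_graph_adj_sym)
  qed (use that in \<open>auto simp: ext_graph_vertices_def\<close>)
  fix p q assume "p \<in> ext_graph_vertices L a (Suc c) y" "q \<in> ext_graph_vertices L a (Suc c) y"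
  then obtain up uq where "up \<in> left_words L a y" "?G'\<^sup>*\<^sup>* p (Inl up)"
    "uq \<in> left_words L a y" "?G'\<^sup>*\<^sup>* q (Inl uq)"
    using anchor by blast
  moreover from this have "?G'\<^sup>*\<^sup>* (Inl up) (Inl uq)"
    using ext_graph_left_reachable_Suc_right[where x = up and q = "Inl uq", OF assms(1) y(2)] connected
    by (force simp: ext_graph_connected_def ext_graph_vertices_def)
  ultimately show "?G'\<^sup>*\<^sup>* p q"
    by (meson rtranclp_trans rtranclp_symmetric ext_graph_adj_sym)
qed

lemma ext_graph_connected_left1:
  "1 \<le> c \<Longrightarrow> y \<in> L \<Longrightarrow> m \<le> length y \<Longrightarrow> ext_graph_connected L 1 c y"
proof (induction c arbitrary: y rule: dec_induct)
  case (step c)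
  then show ?case using ext_graph_connected_Suc_right[of 1 y c] connected_ext1 by blast
qed (use connected_ext1 in blast)

end

lemma ext_graph_connected_rev:
  assumes "ext_graph_connected L a c y"
  shows "ext_graph_connected (rev ` L) c a (rev y)"
  unfolding ext_graph_connected_def
proof (intro ballI)
  define f :: "'a list + 'a list \<Rightarrow> 'a list + 'a list" where "f = case_sum (Inr \<circ> rev) (Inl \<circ> rev)"
  have involution: "f (f p) = p" for p by (cases p) (simp_all add: f_def)
  have vertices: "f p \<in> ext_graph_vertices L a c y" if "p \<in> ext_graph_vertices (rev ` L) c a (rev y)" for p
    using that by (cases p)
      (auto simp: f_def ext_graph_vertices_def left_words_def right_words_def mem_rev_image_iff)
  have embed: "ext_graph_adj (rev ` L) c a (rev y) (f p) (f q)" if "ext_graph_adj L a c y p q" for p q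
    using that by (cases p; cases q) (auto simp: f_def mem_rev_image_iff)
  fix p q
  assume "p \<in> ext_graph_vertices (rev ` L) c a (rev y)" "q \<in> ext_graph_vertices (rev ` L) c a (rev y)"
  then have "(ext_graph_adj L a c y)\<^sup>*\<^sup>* (f p) (f q)"
    using assms vertices unfolding ext_graph_connected_def by blast
  then have "(ext_graph_adj (rev ` L) c a (rev y))\<^sup>*\<^sup>* (f (f p)) (f (f q))"
    using embed by (rule rtranclp_map[rotated])
  then show "(ext_graph_adj (rev ` L) c a (rev y))\<^sup>*\<^sup>* p q" by (simp only: involution)
qed

lemma eventually_dendric_language_rev:
  assumes "eventually_dendric_language L m"
  shows "eventually_dendric_language (rev ` L) m"
proof -
  interpret eventually_dendric_language L m by (rule assms)
  show ?thesis
  proof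
    fix u v w :: "'a list" assume "u @ v @ w \<in> rev ` L"
    then show "v \<in> rev ` L" using factor_closed[of "rev w" "rev v" "rev u"] by (simp add: mem_rev_image_iff)
  next
    fix y :: "'a list" assume "y \<in> rev ` L"
    then show "\<exists>a. a # y \<in> rev ` L" using extend_right[of "rev y"] by (auto simp: mem_rev_image_iff)
    show "\<exists>b. y @ [b] \<in> rev ` L" using extend_left[of "rev y"] \<open>y \<in> rev ` L\<close>
      by (auto simp: mem_rev_image_iff)
  next
    fix y :: "'a list" assume y: "y \<in> rev ` L" "m \<le> length y"
    then have "ext_graph_connected L 1 1 (rev y)" using connected_ext1 by (simp add: mem_rev_image_iff)
    then show "ext_graph_connected (rev ` L) 1 1 y" using ext_graph_connected_rev[of L 1 1 "rev y"] by simp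
    have "{(a, b). a # y @ [b] \<in> rev ` L} = prod.swap ` {(a, b). a # rev y @ [b] \<in> L}"
      by (auto simp: mem_rev_image_iff)
    moreover have "{a. a # y \<in> rev ` L} = {b. rev y @ [b] \<in> L}" "{b. y @ [b] \<in> rev ` L} = {a. a # rev y \<in> L}"
      by (auto simp: mem_rev_image_iff)
    ultimately show "card {(a, b). a # y @ [b] \<in> rev ` L} + 1 \<le> card {a. a # y \<in> rev ` L} + card {b. y @ [b] \<in> rev ` L}"
      using forest_ext1[of "rev y"] y by (simp add: mem_rev_image_iff card_image)
  qed
qed

context eventually_dendric_language
begin

lemma ext_graph_connected_all:
  assumes "1 \<le> a" "1 \<le> c" "y \<in> L" "m \<le> length y"
  shows "ext_graph_connected L a c y"
proof -
  interpret rev: eventually_dendric_language "rev ` L" m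
    by (rule eventually_dendric_language_rev) unfold_locales
  have connected_right1: "ext_graph_connected L a 1 y" if "y \<in> L" "m \<le> length y" for y
    using ext_graph_connected_rev[OF rev.ext_graph_connected_left1[OF assms(1), of "rev y"]] that
    by (simp add: mem_rev_image_iff image_image)
  show ?thesis
    using assms(2)
  proof (induction c rule: dec_induct)
    case (step c)
    then show ?case using ext_graph_connected_Suc_right connected_right1 assms(3,4) by blast
  qed (use connected_right1 assms(3,4) in blast)
qed

lemma ext_graph_branching_unique:
  "\<exists>n. \<forall>w p q. n \<le> length w \<longrightarrow> branching (ext_graph_adj L k k w) p \<longrightarrow>
     branching (ext_graph_adj L k k w) q \<longrightarrow> isl p = isl q \<longrightarrow> p = q"
proof -
  interpret rev: eventually_dendric_language "rev ` L" m
    by (rule eventually_dendric_language_rev) unfold_locales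
  obtain n1 where n1: "\<And>w u u'. n1 \<le> length w \<Longrightarrow> length u = k \<Longrightarrow> length u' = k \<Longrightarrow>
      left_branching L k w u \<Longrightarrow> left_branching L k w u' \<Longrightarrow> u = u'"
    using left_branching_unique by blast
  obtain n2 where n2: "\<And>w u u'. n2 \<le> length w \<Longrightarrow> length u = k \<Longrightarrow> length u' = k \<Longrightarrow>
      left_branching (rev ` L) k w u \<Longrightarrow> left_branching (rev ` L) k w u' \<Longrightarrow> u = u'"
    using rev.left_branching_unique by blast
  have "p = q" if w: "max n1 n2 \<le> length w"
    and branching: "branching (ext_graph_adj L k k w) p" "branching (ext_graph_adj L k k w) q"
    and "isl p = isl q" for w p q
  proof (cases p; cases q)
    fix u u' assume "p = Inl u" "q = Inl u'"
    then show "p = q" using n1 w branching branching_ext_graph_adj_Inl by (metis max.boundedE)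
  next
    fix v v' assume "p = Inr v" "q = Inr v'"
    then have "rev v = rev v'"
      using n2[of "rev w" "rev v" "rev v'"] w branching branching_ext_graph_adj_Inr right_branching_iff_rev
      by (metis length_rev max.boundedE)
    then show "p = q" using \<open>p = Inr v\<close> \<open>q = Inr v'\<close> by simp
  qed (use \<open>isl p = isl q\<close> in auto)
  then show ?thesis by blast
qed

lemma ext_graph_simple_tree_eventually:
  assumes "1 \<le> k"
  shows "\<exists>n. \<forall>w\<in>L. n \<le> length w \<longrightarrow> is_simple_tree (ext_graph_vertices L k k w) (ext_graph_adj L k k w)"
proof -
  obtain n where n: "\<And>w p q. n \<le> length w \<Longrightarrow> branching (ext_graph_adj L k k w) p \<Longrightarrow>
      branching (ext_graph_adj L k k w) q \<Longrightarrow> isl p = isl q \<Longrightarrow> p = q"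
    using ext_graph_branching_unique by blast
  have "is_simple_tree (ext_graph_vertices L k k w) (ext_graph_adj L k k w)"
    if w: "w \<in> L" "max m n \<le> length w" for w
  proof (rule bipartite_simple_tree[where side = isl])
    show "ext_graph_adj L k k w q p" if "ext_graph_adj L k k w p q" for p q
      using that by (rule ext_graph_adj_sym)
    show "q \<in> ext_graph_vertices L k k w" if "ext_graph_adj L k k w p q" for p q
      using that by (rule ext_graph_adj_in_vertices)
    show "isl p \<noteq> isl q" if "ext_graph_adj L k k w p q" for p q
      using that by (cases p; cases q) auto
    obtain u where "length u = k" "u @ w \<in> L" using extend_left_length w(1) by blast
    then show "ext_graph_vertices L k k w \<noteq> {}" by (auto simp: ext_graph_vertices_def left_words_def)
    show "(ext_graph_adj L k k w)\<^sup>*\<^sup>* p q"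
      if "p \<in> ext_graph_vertices L k k w" "q \<in> ext_graph_vertices L k k w" for p q
      using ext_graph_connected_all[of k k w] assms w that by (simp add: ext_graph_connected_def)
  qed (use n w(2) in auto)
  then show ?thesis by blast
qed

end

section \<open>Languages of two-sided sequences\<close>

lemma nth_factor_at [simp]: "j < n \<Longrightarrow> factor_at x i n ! j = x (i + int j)"
  by (simp add: factor_at_def)

lemma eq_factor_at_iff: "w = factor_at x i (length w) \<longleftrightarrow> (\<forall>j<length w. w ! j = x (i + int j))"
proof (intro iffI allI impI)
  fix j assume "w = factor_at x i (length w)" "j < length w"
  then show "w ! j = x (i + int j)" by (metis nth_factor_at)
qed (simp add: factor_at_def nth_equalityI)

lemma mem_lang_iff: "w \<in> lang X \<longleftrightarrow> (\<exists>x\<in>X. \<exists>i. \<forall>j<length w. w ! j = x (i + int j))"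
  by (simp add: lang_def eq_factor_at_iff)

lemma mem_langI: "x \<in> X \<Longrightarrow> (\<And>j. j < length w \<Longrightarrow> w ! j = x (i + int j)) \<Longrightarrow> w \<in> lang X"
  unfolding mem_lang_iff by blast

lemma lang_factor_closed:
  assumes "u @ v @ w \<in> lang X"
  shows "v \<in> lang X"
proof -
  obtain x i where "x \<in> X" and x: "\<And>j. j < length (u @ v @ w) \<Longrightarrow> (u @ v @ w) ! j = x (i + int j)"
    using assms unfolding mem_lang_iff by blast
  have "v ! j = x (i + int (length u) + int j)" if "j < length v" for j
    using x[of "length u + j"] that by (simp add: nth_append add.assoc)
  with \<open>x \<in> X\<close> show ?thesis by (rule mem_langI)
qed

lemma lang_extend_left:
  assumes "y \<in> lang X"
  shows "\<exists>a. a # y \<in> lang X"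
proof -
  obtain x i where "x \<in> X" and x: "\<And>j. j < length y \<Longrightarrow> y ! j = x (i + int j)"
    using assms unfolding mem_lang_iff by blast
  have "(x (i - 1) # y) ! j = x (i - 1 + int j)" if "j < length (x (i - 1) # y)" for j
    using that x by (cases j) (auto simp: algebra_simps)
  with \<open>x \<in> X\<close> have "x (i - 1) # y \<in> lang X" by (rule mem_langI)
  then show ?thesis ..
qed

lemma lang_extend_right:
  assumes "y \<in> lang X"
  shows "\<exists>b. y @ [b] \<in> lang X"
proof -
  obtain x i where "x \<in> X" and x: "\<And>j. j < length y \<Longrightarrow> y ! j = x (i + int j)"
    using assms unfolding mem_lang_iff by blast
  have "(y @ [x (i + int (length y))]) ! j = x (i + int j)" if "j < length (y @ [x (i + int (length y))])" for j
    using that x by (auto simp: nth_append less_Suc_eq)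
  with \<open>x \<in> X\<close> have "y @ [x (i + int (length y))] \<in> lang X" by (rule mem_langI)
  then show ?thesis ..
qed

lemma lang_extensions_closed: "u @ w @ v \<in> lang X \<Longrightarrow> u @ w \<in> lang X \<and> w @ v \<in> lang X"
  using lang_factor_closed[of "[]" "u @ w" v] lang_factor_closed[of u "w @ v" "[]"] by simp

lemma left_ext_eq: "left_ext X k w = left_words (lang X) k w"
  unfolding left_ext_def left_words_def lang_n_def using lang_factor_closed[of "[]" _ w X] by auto

lemma right_ext_eq: "right_ext X k w = right_words (lang X) k w"
  unfolding right_ext_def right_words_def lang_n_def using lang_factor_closed[of w _ "[]" X] by auto

lemma ext_vertices_eq: "ext_vertices X k w = ext_graph_vertices (lang X) k k w"
  unfolding ext_vertices_def ext_graph_vertices_def left_ext_eq right_ext_eq ..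

lemma ext_adj_eq: "ext_adj X k w = ext_graph_adj (lang X) k k w"
proof (intro ext iffI)
  fix p q
  show "ext_graph_adj (lang X) k k w p q" if "ext_adj X k w p q"
    using that by (cases p; cases q)
      (auto simp: ext_adj_def ext_vertices_eq ext_graph_vertices_def left_words_def right_words_def)
  show "ext_adj X k w p q" if adj: "ext_graph_adj (lang X) k k w p q"
  proof -
    have "p \<in> ext_graph_vertices (lang X) k k w" "q \<in> ext_graph_vertices (lang X) k k w"
      using adj ext_graph_adj_sym[OF adj] unfolding ext_graph_vertices_def left_words_def right_words_def
      by (cases p; cases q; force dest: lang_extensions_closed)+
    then show ?thesis using adj by (cases p; cases q) (simp_all add: ext_adj_def ext_vertices_eq)
  qed
qed

lemma card_ext_graph_vertices_1:
  fixes L :: "'a::finite list set"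
  shows "card (ext_graph_vertices L 1 1 y) = card {a. a # y \<in> L} + card {b. y @ [b] \<in> L}"
proof -
  have "left_words L 1 y = (\<lambda>a. [a]) ` {a. a # y \<in> L}" "right_words L 1 y = (\<lambda>b. [b]) ` {b. y @ [b] \<in> L}"
    by (auto simp: left_words_def right_words_def length_Suc_conv)
  then show ?thesis
    unfolding ext_graph_vertices_def
    by (subst card_Un_disjoint) (auto simp: card_image inj_on_def)
qed

lemma card_graph_edges_ext_graph_adj_1:
  "card (graph_edges (ext_graph_adj L 1 1 y)) = card {(a, b). a # y @ [b] \<in> L}"
proof -
  have "graph_edges (ext_graph_adj L 1 1 y) = (\<lambda>(a, b). {Inl [a], Inr [b]}) ` {(a, b). a # y @ [b] \<in> L}"
  proof (intro equalityI subsetI)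
    fix e assume "e \<in> graph_edges (ext_graph_adj L 1 1 y)"
    then obtain p q where "e = {p, q}" "ext_graph_adj L 1 1 y p q" unfolding graph_edges_def by blast
    then show "e \<in> (\<lambda>(a, b). {Inl [a], Inr [b]}) ` {(a, b). a # y @ [b] \<in> L}"
      by (cases p; cases q) (auto simp: length_Suc_conv insert_commute)
  next
    fix e assume "e \<in> (\<lambda>(a, b). {Inl [a], Inr [b]}) ` {(a, b). a # y @ [b] \<in> L}"
    then obtain a b where "e = {Inl [a], Inr [b]}" "ext_graph_adj L 1 1 y (Inl [a]) (Inr [b])" by auto
    then show "e \<in> graph_edges (ext_graph_adj L 1 1 y)" unfolding graph_edges_def by blast
  qed
  moreover have "inj_on (\<lambda>(a, b). {Inl [a], Inr [b]}) {(a, b). a # y @ [b] \<in> L}"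
    by (auto simp: inj_on_def doubleton_eq_iff)
  ultimately show ?thesis by (simp add: card_image)
qed

lemma eventually_dendric_language_lang:
  fixes X :: "(int \<Rightarrow> 'a::finite) set"
  assumes trees: "\<And>w. w \<in> lang_ge X m \<Longrightarrow> is_tree (ext_vertices X 1 w) (ext_adj X 1 w)"
  shows "eventually_dendric_language (lang X) m"
proof
  fix y :: "'a list" assume y: "y \<in> lang X" "m \<le> length y"
  then have tree: "is_tree (ext_graph_vertices (lang X) 1 1 y) (ext_graph_adj (lang X) 1 1 y)"
    using trees[of y] by (simp add: lang_ge_def ext_vertices_eq ext_adj_eq)
  then show "ext_graph_connected (lang X) 1 1 y"
    unfolding ext_graph_connected_def is_tree_def connected_graph_def using is_path_imp_rtranclp by metis
  have "card (graph_edges (ext_graph_adj (lang X) 1 1 y)) + 1 \<le> card (ext_graph_vertices (lang X) 1 1 y)"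
  proof (rule acyclic_card_edges_le)
    show "finite (ext_graph_vertices (lang X) 1 1 y)"
      by (rule finite_subset[of _ "Inl ` {u. length u = 1} \<union> Inr ` {v. length v = 1}"])
        (auto simp: ext_graph_vertices_def left_words_def right_words_def finite_lists_of_length)
    show "x \<in> ext_graph_vertices (lang X) 1 1 y \<and> x' \<in> ext_graph_vertices (lang X) 1 1 y"
      if "ext_graph_adj (lang X) 1 1 y x x'" for x x'
      using that by (cases x; cases x')
        (auto simp: ext_graph_vertices_def left_words_def right_words_def dest: lang_extensions_closed)
    show "\<not> ext_graph_adj (lang X) 1 1 y x x" for x by (cases x) auto
    show "ext_graph_adj (lang X) 1 1 y x' x" if "ext_graph_adj (lang X) 1 1 y x x'" for x x'
      using that by (rule ext_graph_adj_sym)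
  qed (use tree in \<open>simp_all add: is_tree_def connected_graph_def\<close>)
  then show "card {(a, b). a # y @ [b] \<in> lang X} + 1 \<le> card {a. a # y \<in> lang X} + card {b. y @ [b] \<in> lang X}"
    by (simp only: card_graph_edges_ext_graph_adj_1 card_ext_graph_vertices_1)
qed (auto intro: lang_factor_closed lang_extend_left lang_extend_right)

theorem mainTheorem8:
  fixes X :: "(int \<Rightarrow> 'a::finite) set"
  assumes "shift_space X"
    and "eventually_dendric X"
    and "1 \<le> k"
  shows "\<exists>n\<ge>1. \<forall>w \<in> lang_ge X n.
           is_simple_tree (ext_vertices X k w) (ext_adj X k w)"
proof -
  \<comment> \<open>the language of any set of two-sided sequences is factorial and extendable\<close>
  obtain m where "\<And>w. w \<in> lang_ge X m \<Longrightarrow> is_tree (ext_vertices X 1 w) (ext_adj X 1 w)"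
    using assms(2) unfolding eventually_dendric_def by blast
  then interpret eventually_dendric_language "lang X" m
    by (rule eventually_dendric_language_lang)
  obtain n where "\<forall>w\<in>lang X. n \<le> length w \<longrightarrow>
      is_simple_tree (ext_graph_vertices (lang X) k k w) (ext_graph_adj (lang X) k k w)"
    using ext_graph_simple_tree_eventually[OF assms(3)] by blast
  then show ?thesis
    by (intro exI[of _ "max n 1"]) (auto simp: lang_ge_def ext_vertices_eq ext_adj_eq)
qed

end
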